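(* Let $\{w^k\}$ be generated by the L-GADMM iteration. Then for every $k\ge0$, $$\|w^{k+1}-w^{k+2}\|_H^2\le\|w^k-w^{k+1}\|_H^2.$$
   Context: Standing setting. Let $m\ge 2$, $\ell$, $n_1,\dots,n_m$ be positive integers. For $i=1,\dots,m$ let $\theta_i:\mathbb{R}^{n_i}\to\mathbb{R}$ be convex, $\mathcal{X}_i\subseteq\mathbb{R}^{n_i}$ nonempty closed convex, $A_i\in\mathbb{R}^{\ell\times n_i}$ of full column rank, and $b\in\mathbb{R}^\ell$. Problem (P): $\min\{\sum_{i=1}^m\theta_i(x_i):\sum_{i=1}^mA_ix_i=b,\ x_i\in\mathcal{X}_i\}$, assumed to have a nonempty solution set. Write $u=(x_1,\dots,x_m)$, $w=(x_1,\dots,x_m,y)$ with $y\in\mathbb{R}^\ell$, $\theta(u)=\sum_i\theta_i(x_i)$, $F(w)=(-A_1^\top y,\dots,-A_m^\top y,\ \sum_iA_ix_i-b)$, $\mathcal{W}=\mathcal{X}_1\times\cdots\times\mathcal{X}_m\times\mathbb{R}^\ell$, and $\mathcal{W}^*=\{w^*\in\mathcal{W}:\theta(u)-\theta(u^* )+(w-w^* )^\top F(w^* )\ge0\ \forall w\in\mathcal{W}\}$ (nonempty). For symmetric $G$, $\|v\|_G^2:=v^\top Gv$; $\|\cdot\|$ is the Euclidean norm. Vectors are partitioned as $w=(R,x_m,y)$ with $R=(x_1,\dots,x_{m-1})$. Parameters: $\rho>0$, $\gamma\in(0,2)$, symmetric positive definite $P_i\in\mathbb{R}^{n_i\times n_i}$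 ($i=1,\dots,m$) such that $G_1\succ0$, where $G_1$ is the symmetric block matrix with diagonal blocks $P_1,\dots,P_{m-1}$ and $(i,j)$ block $-\rho A_i^\top A_j$ for $i\ne j$, $1\le i,j\le m-1$. Matrices (w.r.t. the partition $(R,x_m,y)$): $Q=\begin{pmatrix}G_1&0&0\\0&\rho A_m^\top A_m+P_m&(1-\gamma)A_m^\top\\0&-A_m&\frac1\rho I_\ell\end{pmatrix}$, $M=\begin{pmatrix}I&0&0\\0&I_{n_m}&0\\0&-\rho A_m&\gamma I_\ell\end{pmatrix}$, $H=\begin{pmatrix}G_1&0&0\\0&P_m+\frac\rho\gamma A_m^\top A_m&\frac{1-\gamma}\gamma A_m^\top\\0&\frac{1-\gamma}\gamma A_m&\frac1{\gamma\rho}I_\ell\end{pmatrix}$, $N=Q^\top+Q-M^\top HM$. L-GADMM iteration: from an arbitrary $w^0=(x_1^0,\dots,x_m^0,y^0)\in\mathcal{W}$, for $k=0,1,2,\dots$: $x_j^{k+1}=\arg\min_{x_j\in\mathcal{X}_j}\{\theta_j(x_j)+\frac\rho2\|A_jx_j+\sum_{i=1,i\ne j}^mA_ix_i^k-b-\frac{y^k}\rho\|^2+\frac12\|x_j-x_j^k\|_{P_j}^2\}$ for $j=1,\dots,m-1$; $x_m^{k+1}=\arg\min_{x_m\in\mathcal{X}_m}\{\theta_m(x_m)+\frac\rho2\|\gamma\sum_{i=1}^{m-1}A_ix_i^{k+1}+(1-\gamma)(b-A_mx_m^k)+A_mx_m-b-\frac{y^k}\rho\|^2+\frac12\|x_m-x_m^k\|_{P_m}^2\}$;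 $y^{k+1}=y^k-\rho\big(\gamma\sum_{i=1}^{m-1}A_ix_i^{k+1}+(1-\gamma)(b-A_mx_m^k)+A_mx_m^{k+1}-b\big)$. Auxiliary sequence: $\bar w^k=(\bar x_1^k,\dots,\bar x_m^k,\bar y^k)$ with $\bar x_i^k=x_i^{k+1}$ ($i=1,\dots,m$) and $\bar y^k=y^k-\rho(\sum_{i=1}^{m-1}A_ix_i^{k+1}+A_mx_m^k-b)$; $\bar u^k=(\bar x_1^k,\dots,\bar x_m^k)$, $R^k=(x_1^k,\dots,x_{m-1}^k)$, $\bar R^k=(\bar x_1^k,\dots,\bar x_{m-1}^k)$. *)

theory Defs
  imports "Jordan_Normal_Form.Matrix"
begin

(* Vectors of R^d are rendered as JNF vectors v :: real vec with v : carrier_vec d;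
   matrices of R^{p x q} as M :: real mat with M : carrier_mat p q.
   Blocks are indexed 1..m. *)

definition vsum :: "nat \<Rightarrow> (nat \<Rightarrow> real vec) \<Rightarrow> nat set \<Rightarrow> real vec" where
  "vsum d f I = vec d (\<lambda>r. \<Sum>i\<in>I. f i $ r)"

definition sqn :: "real vec \<Rightarrow> real" where
  "sqn v = v \<bullet> v"

definition wnorm2 :: "real mat \<Rightarrow> real vec \<Rightarrow> real" where
  "wnorm2 P v = v \<bullet> (P *\<^sub>v v)"

definition convex_vec_set :: "nat \<Rightarrow> real vec set \<Rightarrow> bool" where
  "convex_vec_set d X \<longleftrightarrow> X \<subseteq> carrier_vec d \<and>
     (\<forall>x\<in>X. \<forall>y\<in>X. \<forall>t::real. 0 \<le> t \<and> t \<le> 1 \<longrightarrow> t \<cdot>\<^sub>v x + (1 - t) \<cdot>\<^sub>v y \<in> X)"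

definition closed_vec_set :: "nat \<Rightarrow> real vec set \<Rightarrow> bool" where
  "closed_vec_set d X \<longleftrightarrow> X \<subseteq> carrier_vec d \<and>
     (\<forall>f v. (\<forall>k. f k \<in> X) \<longrightarrow> v \<in> carrier_vec d \<longrightarrow>
        (\<lambda>k. sqrt (sqn (f k - v))) \<longlonglongrightarrow> 0 \<longrightarrow> v \<in> X)"

definition convex_vec_fun :: "nat \<Rightarrow> (real vec \<Rightarrow> real) \<Rightarrow> bool" where
  "convex_vec_fun d f \<longleftrightarrow>
     (\<forall>x\<in>carrier_vec d. \<forall>y\<in>carrier_vec d. \<forall>t::real. 0 \<le> t \<and> t \<le> 1 \<longrightarrow>
        f (t \<cdot>\<^sub>v x + (1 - t) \<cdot>\<^sub>v y) \<le> t * f x + (1 - t) * f y)"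

definition sym_pd :: "nat \<Rightarrow> real mat \<Rightarrow> bool" where
  "sym_pd d P \<longleftrightarrow> P \<in> carrier_mat d d \<and> transpose_mat P = P \<and>
     (\<forall>v\<in>carrier_vec d. v \<noteq> 0\<^sub>v d \<longrightarrow> v \<bullet> (P *\<^sub>v v) > 0)"

definition full_col_rank :: "nat \<Rightarrow> nat \<Rightarrow> real mat \<Rightarrow> bool" where
  "full_col_rank p q A \<longleftrightarrow> A \<in> carrier_mat p q \<and>
     (\<forall>v\<in>carrier_vec q. A *\<^sub>v v = 0\<^sub>v p \<longrightarrow> v = 0\<^sub>v q)"

definition G1_qf :: "nat \<Rightarrow> real \<Rightarrow> (nat \<Rightarrow> real mat) \<Rightarrow> (nat \<Rightarrow> real mat) \<Rightarrow> (nat \<Rightarrow> real vec) \<Rightarrow> real" where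
  "G1_qf m \<rho> A P d =
     (\<Sum>i\<in>{1..m-1}. wnorm2 (P i) (d i))
     - \<rho> * (\<Sum>i\<in>{1..m-1}. \<Sum>j\<in>{1..m-1} - {i}. (A i *\<^sub>v d i) \<bullet> (A j *\<^sub>v d j))"

(* ||w||_H^2 for w = (R, x_m, y) = (d_1,...,d_m, e), with H as in the paper, written out blockwise:
   ||R||_{G1}^2 + x_m^T (P_m + rho/gamma A_m^T A_m) x_m + 2 (1-gamma)/gamma (A_m x_m)^T y
   + 1/(gamma rho) ||y||^2 *)
definition H_qf :: "nat \<Rightarrow> real \<Rightarrow> real \<Rightarrow> (nat \<Rightarrow> real mat) \<Rightarrow> (nat \<Rightarrow> real mat)
                      \<Rightarrow> (nat \<Rightarrow> real vec) \<Rightarrow> real vec \<Rightarrow> real" where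
  "H_qf m \<rho> \<gamma> A P d e =
     G1_qf m \<rho> A P d
     + wnorm2 (P m) (d m) + (\<rho> / \<gamma>) * sqn (A m *\<^sub>v d m)
     + 2 * ((1 - \<gamma>) / \<gamma>) * ((A m *\<^sub>v d m) \<bullet> e)
     + (1 / (\<gamma> * \<rho>)) * sqn e"

end

theory Submission
  imports Defs
begin

text \<open>Each subproblem of L-GADMM is a proximal least-squares step, so its minimiser satisfies a
  variational inequality. Writing this inequality at iterations \<open>k\<close> and \<open>k+1\<close> and adding the
  two cancels the objective \<open>\<theta>\<close> by monotonicity. The dual update expresses the multiplier increments
  through the primal ones, and summing the block inequalities, the difference
  \<open>\<parallel>w\<^sup>k - w\<^sup>k\<^sup>+\<^sup>1\<parallel>\<^sub>H\<^sup>2 - \<parallel>w\<^sup>k\<^sup>+\<^sup>1 - w\<^sup>k\<^sup>+\<^sup>2\<parallel>\<^sub>H\<^sup>2\<close> becomes a nonnegative combination of these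
  inequalities, of \<open>\<parallel>\<cdot>\<parallel>\<^sub>G\<^sub>1\<^sup>2\<close> and \<open>\<parallel>\<cdot>\<parallel>\<^sub>P\<^sub>m\<^sup>2\<close> of the change of the primal increments, and of
  \<open>(2 - \<gamma>) \<rho> \<parallel>\<Sum>\<^sub>i\<^sub><\<^sub>m A\<^sub>i (x\<^sub>i\<^sup>k\<^sup>+\<^sup>1 - x\<^sub>i\<^sup>k\<^sup>+\<^sup>2) + A\<^sub>m (x\<^sub>m\<^sup>k - x\<^sub>m\<^sup>k\<^sup>+\<^sup>1)\<parallel>\<^sup>2\<close>.\<close>

lemma scalar_prod_sym_mat_vec_comm:
  fixes P :: "real mat"
  assumes P: "P \<in> carrier_mat d d" "transpose_mat P = P"
    and u: "u \<in> carrier_vec d" and v: "v \<in> carrier_vec d"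
  shows "u \<bullet> (P *\<^sub>v v) = v \<bullet> (P *\<^sub>v u)"
proof -
  have "u \<bullet> (P *\<^sub>v v) = (transpose_mat P *\<^sub>v u) \<bullet> v"
    using transpose_vec_mult_scalar[OF P(1) v u] by simp
  also have "\<dots> = v \<bullet> (P *\<^sub>v u)" using P u v by (simp add: comm_scalar_prod[of _ d])
  finally show ?thesis .
qed

lemma sqn_add_smult:
  assumes "u \<in> carrier_vec d" "v \<in> carrier_vec d"
  shows "sqn (u + t \<cdot>\<^sub>v v) = sqn u + 2 * t * (v \<bullet> u) + t\<^sup>2 * sqn v"
  using assms unfolding sqn_def
  by (simp add: add_scalar_prod_distrib[of _ d] scalar_prod_add_distrib[of _ d]
      comm_scalar_prod[of u d v] power2_eq_square algebra_simps)

lemma sqn_diff: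
  assumes "u \<in> carrier_vec d" "v \<in> carrier_vec d"
  shows "sqn (u - v) = sqn u - 2 * (u \<bullet> v) + sqn v"
proof -
  have "u - v = u + (-1) \<cdot>\<^sub>v v" using assms by (intro eq_vecI) auto
  then show ?thesis using sqn_add_smult[OF assms, of "-1"] assms by (simp add: comm_scalar_prod[of v d])
qed

lemma sqn_nonneg: "0 \<le> sqn (v :: real vec)"
  unfolding sqn_def scalar_prod_def by (auto intro: sum_nonneg)

lemma wnorm2_add_smult:
  assumes P: "P \<in> carrier_mat d d" "transpose_mat P = P"
    and u: "u \<in> carrier_vec d" and v: "v \<in> carrier_vec d"
  shows "wnorm2 P (u + t \<cdot>\<^sub>v v) = wnorm2 P u + 2 * t * (v \<bullet> (P *\<^sub>v u)) + t\<^sup>2 * wnorm2 P v"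
proof -
  have "P *\<^sub>v (u + t \<cdot>\<^sub>v v) = P *\<^sub>v u + t \<cdot>\<^sub>v (P *\<^sub>v v)"
    using P u v by (simp add: mult_add_distrib_mat_vec[of _ d d] mult_mat_vec[of _ d d])
  then show ?thesis
    unfolding wnorm2_def using P u v scalar_prod_sym_mat_vec_comm[OF P u v]
    by (simp add: add_scalar_prod_distrib[of _ d] scalar_prod_add_distrib[of _ d]
        power2_eq_square algebra_simps)
qed

lemma wnorm2_diff:
  assumes P: "P \<in> carrier_mat d d" "transpose_mat P = P"
    and u: "u \<in> carrier_vec d" and v: "v \<in> carrier_vec d"
  shows "wnorm2 P (u - v) = wnorm2 P u - 2 * (v \<bullet> (P *\<^sub>v u)) + wnorm2 P v"
proof -
  have "u - v = u + (-1) \<cdot>\<^sub>v v" using u v by (intro eq_vecI) auto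
  then show ?thesis using wnorm2_add_smult[OF P u v, of "-1"] by simp
qed

lemma wnorm2_nonneg:
  assumes "sym_pd d P" "v \<in> carrier_vec d"
  shows "0 \<le> wnorm2 P v"
proof (cases "v = 0\<^sub>v d")
  case True
  have "P *\<^sub>v v \<in> carrier_vec d" using assms by (auto simp: sym_pd_def)
  then show ?thesis unfolding wnorm2_def True by simp
next
  case False
  then show ?thesis using assms by (simp add: sym_pd_def wnorm2_def less_imp_le)
qed

lemma nonneg_if_nonneg_near_zero:
  fixes a c :: real
  assumes "\<And>t. 0 < t \<Longrightarrow> t \<le> 1 \<Longrightarrow> 0 \<le> t * a + t\<^sup>2 * c"
  shows "0 \<le> a"
proof (rule ccontr)
  assume "\<not> 0 \<le> a"
  define t where "t = min 1 (- a / (2 * (\<bar>c\<bar> + 1)))"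
  have "0 < 2 * (\<bar>c\<bar> + 1)" by simp
  then have t: "0 < t" "t \<le> 1" using \<open>\<not> 0 \<le> a\<close> by (auto simp: t_def divide_neg_pos)
  have "t * (2 * (\<bar>c\<bar> + 1)) \<le> - a"
    unfolding t_def by (auto simp: min_def pos_le_divide_eq[symmetric] add_pos_nonneg)
  then have "2 * (t * \<bar>c\<bar>) + 2 * t \<le> - a" by (simp add: algebra_simps)
  moreover have "t * c \<le> t * \<bar>c\<bar>" "0 \<le> t * \<bar>c\<bar>" using t by (simp_all add: mult_left_mono)
  ultimately have "a + t * c < 0" using t by linarith
  then have "t * (a + t * c) < 0" using t by (simp add: mult_pos_neg)
  with assms[OF t] show False by (simp add: power2_eq_square algebra_simps)
qed

lemma is_arg_min_cong:
  assumes "is_arg_min f Q x" "\<And>z. Q z \<Longrightarrow> f z = g z"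
  shows "is_arg_min g Q x"
  using assms unfolding is_arg_min_def by metis

lemma is_arg_min_prox_variational_ineq:
  fixes \<theta> :: "real vec \<Rightarrow> real" and A P :: "real mat"
  assumes \<theta>: "convex_vec_fun d \<theta>" and X: "convex_vec_set d X"
    and A: "A \<in> carrier_mat l d" and P: "P \<in> carrier_mat d d" "transpose_mat P = P"
    and w: "w \<in> carrier_vec l" and x0: "x0 \<in> carrier_vec d"
    and min: "is_arg_min (\<lambda>z. \<theta> z + c * sqn (A *\<^sub>v z + w) + 1/2 * wnorm2 P (z - x0))
                (\<lambda>z. z \<in> X) xs"
    and z: "z \<in> X"
  shows "0 \<le> \<theta> z - \<theta> xs + 2 * c * ((A *\<^sub>v (z - xs)) \<bullet> (A *\<^sub>v xs + w))
             + (z - xs) \<bullet> (P *\<^sub>v (xs - x0))"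
proof -
  have xs: "xs \<in> X" using min by (simp add: is_arg_min_def)
  have X_carrier: "X \<subseteq> carrier_vec d" using X by (simp add: convex_vec_set_def)
  define h where "h = z - xs"
  define u where "u = A *\<^sub>v xs + w"
  define q where "q = xs - x0"
  have "xs \<in> carrier_vec d" "z \<in> carrier_vec d" using xs z X_carrier by auto
  then have carriers: "xs \<in> carrier_vec d" "z \<in> carrier_vec d" "h \<in> carrier_vec d"
    "q \<in> carrier_vec d" "u \<in> carrier_vec l" "A *\<^sub>v h \<in> carrier_vec l"
    using A w x0 by (auto simp: h_def u_def q_def)
  define a where "a = \<theta> z - \<theta> xs + 2 * c * ((A *\<^sub>v h) \<bullet> u) + h \<bullet> (P *\<^sub>v q)"
  have "0 \<le> t * a + t\<^sup>2 * (c * sqn (A *\<^sub>v h) + 1/2 * wnorm2 P h)" if t: "0 < t" "t \<le> 1" for t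
  proof -
    define zt where "zt = t \<cdot>\<^sub>v z + (1 - t) \<cdot>\<^sub>v xs"
    have "zt \<in> X" using X xs z t by (simp add: convex_vec_set_def zt_def)
    then have "\<theta> xs + c * sqn u + 1/2 * wnorm2 P q \<le>
               \<theta> zt + c * sqn (A *\<^sub>v zt + w) + 1/2 * wnorm2 P (zt - x0)"
      using min by (auto simp: is_arg_min_def not_less u_def q_def)
    moreover have "zt = xs + t \<cdot>\<^sub>v h"
      using carriers by (auto intro!: eq_vecI simp: zt_def h_def algebra_simps)
    then have "A *\<^sub>v zt + w = u + t \<cdot>\<^sub>v (A *\<^sub>v h)" "zt - x0 = q + t \<cdot>\<^sub>v h"
      using carriers A x0 w
      by (auto intro!: eq_vecI simp: u_def q_def mult_add_distrib_mat_vec[of _ l d]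
          mult_mat_vec[of _ l d] algebra_simps)
    moreover have "\<theta> zt \<le> t * \<theta> z + (1 - t) * \<theta> xs"
      using \<theta> carriers t by (auto simp: convex_vec_fun_def zt_def)
    ultimately show ?thesis
      using sqn_add_smult[of u l "A *\<^sub>v h" t] wnorm2_add_smult[OF P, of q h t] carriers
      by (simp add: a_def algebra_simps)
  qed
  then have "0 \<le> a" by (rule nonneg_if_nonneg_near_zero)
  then show ?thesis by (simp add: a_def h_def u_def q_def)
qed

lemma prox_variational_ineqs_add:
  fixes \<theta> :: "real vec \<Rightarrow> real" and A P :: "real mat"
  assumes A: "A \<in> carrier_mat l d" and P: "P \<in> carrier_mat d d" "transpose_mat P = P"
    and p: "p0 \<in> carrier_vec d" "p1 \<in> carrier_vec d" "p2 \<in> carrier_vec d"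
    and U: "U0 \<in> carrier_vec l" "U1 \<in> carrier_vec l"
    and vi1: "0 \<le> \<theta> p2 - \<theta> p1 + c * ((A *\<^sub>v (p2 - p1)) \<bullet> U0) + (p2 - p1) \<bullet> (P *\<^sub>v (p1 - p0))"
    and vi2: "0 \<le> \<theta> p1 - \<theta> p2 + c * ((A *\<^sub>v (p1 - p2)) \<bullet> U1) + (p1 - p2) \<bullet> (P *\<^sub>v (p2 - p1))"
  shows "0 \<le> c * ((A *\<^sub>v (p1 - p2)) \<bullet> (U1 - U0)) + (p1 - p2) \<bullet> (P *\<^sub>v (p0 - p1))
             - wnorm2 P (p1 - p2)"
proof -
  have neg: "p2 - p1 = (-1) \<cdot>\<^sub>v (p1 - p2)" "p1 - p0 = (-1) \<cdot>\<^sub>v (p0 - p1)"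
    using p by (auto intro!: eq_vecI)
  have "p1 - p2 \<in> carrier_vec d" "p0 - p1 \<in> carrier_vec d" using p by auto
  then show ?thesis
    using vi1 vi2 A P U unfolding neg wnorm2_def
    by (simp add: mult_mat_vec[of _ l d] mult_mat_vec[of _ d d]
        scalar_prod_minus_distrib[of _ l] algebra_simps)
qed

lemma index_vsum [simp]: "r < d \<Longrightarrow> vsum d F I $ r = (\<Sum>i\<in>I. F i $ r)"
  by (simp add: vsum_def)

lemma vsum_carrier [simp]: "vsum d F I \<in> carrier_vec d"
  by (simp add: vsum_def)

lemma dim_vsum [simp]: "dim_vec (vsum d F I) = d"
  by (simp add: vsum_def)

lemma vsum_minus:
  assumes "\<And>i. i \<in> I \<Longrightarrow> F i \<in> carrier_vec d" "\<And>i. i \<in> I \<Longrightarrow> G i \<in> carrier_vec d"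
  shows "vsum d (\<lambda>i. F i - G i) I = vsum d F I - vsum d G I"
proof -
  have "\<And>i. i \<in> I \<Longrightarrow> dim_vec (G i) = d" using assms(2) carrier_vecD by blast
  then show ?thesis by (intro eq_vecI) (auto simp: sum_subtractf[symmetric] intro!: sum.cong)
qed

lemma vsum_scalar_prod:
  assumes I: "finite I" and F: "\<And>i. i \<in> I \<Longrightarrow> F i \<in> carrier_vec d" and v: "v \<in> carrier_vec d"
  shows "vsum d F I \<bullet> v = (\<Sum>i\<in>I. F i \<bullet> v)"
proof -
  have "vsum d F I \<bullet> v = (\<Sum>r<d. \<Sum>i\<in>I. F i $ r * v $ r)"
    using v by (simp add: scalar_prod_def sum_distrib_right lessThan_atLeast0)
  also have "\<dots> = (\<Sum>i\<in>I. F i \<bullet> v)"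
    using F v by (subst sum.swap) (auto intro!: sum.cong simp: scalar_prod_def lessThan_atLeast0)
  finally show ?thesis .
qed

lemma sum_off_diagonal_scalar_prod:
  assumes I: "finite I"
    and F: "\<And>i. i \<in> I \<Longrightarrow> F i \<in> carrier_vec d" and G: "\<And>i. i \<in> I \<Longrightarrow> G i \<in> carrier_vec d"
  shows "(\<Sum>i\<in>I. \<Sum>j\<in>I-{i}. F i \<bullet> G j) = vsum d F I \<bullet> vsum d G I - (\<Sum>i\<in>I. F i \<bullet> G i)"
proof -
  have "vsum d F I \<bullet> vsum d G I = (\<Sum>i\<in>I. vsum d G I \<bullet> F i)"
    using vsum_scalar_prod[OF I F] F by (auto intro!: sum.cong comm_scalar_prod[of _ d])
  also have "\<dots> = (\<Sum>i\<in>I. \<Sum>j\<in>I. F i \<bullet> G j)"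
    using vsum_scalar_prod[OF I G] F G by (auto intro!: sum.cong comm_scalar_prod[of _ d])
  also have "\<dots> = (\<Sum>i\<in>I. F i \<bullet> G i + (\<Sum>j\<in>I-{i}. F i \<bullet> G j))"
    using I by (intro sum.cong) (auto simp: sum.remove)
  finally show ?thesis by (simp add: sum.distrib)
qed

definition G1_bf :: "nat \<Rightarrow> real \<Rightarrow> (nat \<Rightarrow> real mat) \<Rightarrow> (nat \<Rightarrow> real mat)
                      \<Rightarrow> (nat \<Rightarrow> real vec) \<Rightarrow> (nat \<Rightarrow> real vec) \<Rightarrow> real" where
  "G1_bf m \<rho> A P d d' =
     (\<Sum>i\<in>{1..m-1}. d' i \<bullet> (P i *\<^sub>v d i))
     - \<rho> * (\<Sum>i\<in>{1..m-1}. \<Sum>j\<in>{1..m-1} - {i}. (A i *\<^sub>v d i) \<bullet> (A j *\<^sub>v d' j))"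

lemma G1_qf_eq_G1_bf: "G1_qf m \<rho> A P d = G1_bf m \<rho> A P d d"
  by (simp add: G1_qf_def G1_bf_def wnorm2_def)

lemma G1_bf_eq_vsum:
  assumes A: "\<And>i. i \<in> {1..m-1} \<Longrightarrow> A i \<in> carrier_mat l (n i)"
    and d: "\<And>i. i \<in> {1..m-1} \<Longrightarrow> d i \<in> carrier_vec (n i)"
    and d': "\<And>i. i \<in> {1..m-1} \<Longrightarrow> d' i \<in> carrier_vec (n i)"
  shows "G1_bf m \<rho> A P d d' =
     (\<Sum>i\<in>{1..m-1}. d' i \<bullet> (P i *\<^sub>v d i))
     - \<rho> * (vsum l (\<lambda>i. A i *\<^sub>v d i) {1..m-1} \<bullet> vsum l (\<lambda>i. A i *\<^sub>v d' i) {1..m-1}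
            - (\<Sum>i\<in>{1..m-1}. (A i *\<^sub>v d i) \<bullet> (A i *\<^sub>v d' i)))"
  unfolding G1_bf_def using A d d'
  by (subst sum_off_diagonal_scalar_prod[where d = l]) (auto intro: mult_mat_vec_carrier)

lemma G1_qf_diff:
  assumes A: "\<And>i. i \<in> {1..m-1} \<Longrightarrow> A i \<in> carrier_mat l (n i)"
    and P: "\<And>i. i \<in> {1..m-1} \<Longrightarrow> P i \<in> carrier_mat (n i) (n i)"
      "\<And>i. i \<in> {1..m-1} \<Longrightarrow> transpose_mat (P i) = P i"
    and d: "\<And>i. i \<in> {1..m-1} \<Longrightarrow> d i \<in> carrier_vec (n i)"
    and d': "\<And>i. i \<in> {1..m-1} \<Longrightarrow> d' i \<in> carrier_vec (n i)"
  shows "G1_qf m \<rho> A P (\<lambda>i. d i - d' i)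
         = G1_qf m \<rho> A P d - 2 * G1_bf m \<rho> A P d d' + G1_qf m \<rho> A P d'"
proof -
  define J where "J = {1..m-1}"
  define a where "a = (\<lambda>i. A i *\<^sub>v d i)"
  define a' where "a' = (\<lambda>i. A i *\<^sub>v d' i)"
  have a: "a i \<in> carrier_vec l" "a' i \<in> carrier_vec l" if "i \<in> J" for i
    using A d d' that unfolding a_def a'_def J_def by (auto intro: mult_mat_vec_carrier)
  have Adiff: "A i *\<^sub>v (d i - d' i) = a i - a' i" if "i \<in> J" for i
    using A d d' that unfolding a_def a'_def J_def by (auto intro: mult_minus_distrib_mat_vec)
  then have "vsum l (\<lambda>i. A i *\<^sub>v (d i - d' i)) J = vsum l (\<lambda>i. a i - a' i) J"
    by (simp add: vsum_def cong: sum.cong)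
  also have "\<dots> = vsum l a J - vsum l a' J" using a by (rule vsum_minus)
  finally have sum_diff: "vsum l (\<lambda>i. A i *\<^sub>v (d i - d' i)) J = vsum l a J - vsum l a' J" .
  have wnorm2_diff_i: "(d i - d' i) \<bullet> (P i *\<^sub>v (d i - d' i))
      = d i \<bullet> (P i *\<^sub>v d i) - 2 * (d' i \<bullet> (P i *\<^sub>v d i)) + d' i \<bullet> (P i *\<^sub>v d' i)" if "i \<in> J" for i
    using wnorm2_diff[OF P[OF that[unfolded J_def]] d[OF that[unfolded J_def]] d'[OF that[unfolded J_def]]]
    by (simp add: wnorm2_def)
  have sqn_diff_i: "(A i *\<^sub>v (d i - d' i)) \<bullet> (A i *\<^sub>v (d i - d' i))
      = a i \<bullet> a i - 2 * (a i \<bullet> a' i) + a' i \<bullet> a' i" if "i \<in> J" for i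
    using sqn_diff[OF a[OF that]] by (simp add: sqn_def Adiff[OF that])
  have "G1_qf m \<rho> A P (\<lambda>i. d i - d' i) =
        (\<Sum>i\<in>J. (d i - d' i) \<bullet> (P i *\<^sub>v (d i - d' i)))
        - \<rho> * (vsum l (\<lambda>i. A i *\<^sub>v (d i - d' i)) J \<bullet> vsum l (\<lambda>i. A i *\<^sub>v (d i - d' i)) J
               - (\<Sum>i\<in>J. (A i *\<^sub>v (d i - d' i)) \<bullet> (A i *\<^sub>v (d i - d' i))))"
    unfolding G1_qf_eq_G1_bf J_def using A d d' by (intro G1_bf_eq_vsum) auto
  also have "\<dots> =
        (\<Sum>i\<in>J. d i \<bullet> (P i *\<^sub>v d i) - 2 * (d' i \<bullet> (P i *\<^sub>v d i)) + d' i \<bullet> (P i *\<^sub>v d' i))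
        - \<rho> * (sqn (vsum l a J - vsum l a' J)
               - (\<Sum>i\<in>J. a i \<bullet> a i - 2 * (a i \<bullet> a' i) + a' i \<bullet> a' i))"
    by (simp add: sum_diff wnorm2_diff_i sqn_diff_i sqn_def cong: sum.cong)
  also have "\<dots> = G1_qf m \<rho> A P d - 2 * G1_bf m \<rho> A P d d' + G1_qf m \<rho> A P d'"
  proof -
    have bf: "G1_bf m \<rho> A P d d' = (\<Sum>i\<in>J. d' i \<bullet> (P i *\<^sub>v d i))
            - \<rho> * (vsum l a J \<bullet> vsum l a' J - (\<Sum>i\<in>J. a i \<bullet> a' i))"
      "G1_bf m \<rho> A P d d = (\<Sum>i\<in>J. d i \<bullet> (P i *\<^sub>v d i))
            - \<rho> * (vsum l a J \<bullet> vsum l a J - (\<Sum>i\<in>J. a i \<bullet> a i))"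
      "G1_bf m \<rho> A P d' d' = (\<Sum>i\<in>J. d' i \<bullet> (P i *\<^sub>v d' i))
            - \<rho> * (vsum l a' J \<bullet> vsum l a' J - (\<Sum>i\<in>J. a' i \<bullet> a' i))"
      unfolding a_def a'_def J_def using A d d' by (intro G1_bf_eq_vsum; auto)+
    have sqn_sum: "sqn (vsum l a J - vsum l a' J)
        = vsum l a J \<bullet> vsum l a J - 2 * (vsum l a J \<bullet> vsum l a' J) + vsum l a' J \<bullet> vsum l a' J"
      using sqn_diff[of "vsum l a J" l "vsum l a' J"] by (simp add: sqn_def)
    show ?thesis
      unfolding G1_qf_eq_G1_bf bf sqn_sum
      by (simp add: sum.distrib sum_subtractf sum_distrib_left algebra_simps)
  qed
  finally show ?thesis .
qed

lemma G1_qf_nonneg: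
  assumes pos: "\<forall>d. (\<forall>i\<in>{1..m-1}. d i \<in> carrier_vec (n i)) \<and>
                    (\<exists>i\<in>{1..m-1}. d i \<noteq> 0\<^sub>v (n i)) \<longrightarrow> G1_qf m \<rho> A P d > 0"
    and A: "\<And>i. i \<in> {1..m-1} \<Longrightarrow> A i \<in> carrier_mat l (n i)"
    and P: "\<And>i. i \<in> {1..m-1} \<Longrightarrow> P i \<in> carrier_mat (n i) (n i)"
    and d: "\<And>i. i \<in> {1..m-1} \<Longrightarrow> d i \<in> carrier_vec (n i)"
  shows "0 \<le> G1_qf m \<rho> A P d"
proof (cases "\<exists>i\<in>{1..m-1}. d i \<noteq> 0\<^sub>v (n i)")
  case True
  then show ?thesis using pos d by (simp add: less_imp_le)
next
  case False
  have "A i *\<^sub>v 0\<^sub>v (n i) = 0\<^sub>v l" "P i *\<^sub>v 0\<^sub>v (n i) \<in> carrier_vec (n i)" if "i \<in> {1..m-1}" for i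
    using A[OF that] P[OF that] by (auto intro!: eq_vecI)
  then show ?thesis using False by (simp add: G1_qf_def wnorm2_def)
qed

lemma H_qf_step_algebra:
  fixes a a' D f g :: "real vec" and Ge Gd B We Wd Wed :: real
  assumes carrier: "a \<in> carrier_vec l" "a' \<in> carrier_vec l" "D \<in> carrier_vec l" "f \<in> carrier_vec l"
    and \<rho>: "0 < \<rho>" and \<gamma>: "0 < \<gamma>" "\<gamma> < 2"
    and g: "g = f + \<rho> \<cdot>\<^sub>v ((1 - \<gamma>) \<cdot>\<^sub>v a - a' - \<gamma> \<cdot>\<^sub>v D)"
    and blocks: "0 \<le> D \<bullet> f - \<rho> * sqn D - \<rho> * (D \<bullet> a) + B - Gd"
    and last_block: "0 \<le> a' \<bullet> g + Wed - Wd"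
    and G1_psd: "0 \<le> Ge - 2 * B + Gd"
    and P_psd: "0 \<le> We - 2 * Wed + Wd"
  shows "Gd + Wd + \<rho> / \<gamma> * sqn a' + 2 * ((1 - \<gamma>) / \<gamma>) * (a' \<bullet> g) + 1 / (\<gamma> * \<rho>) * sqn g
       \<le> Ge + We + \<rho> / \<gamma> * sqn a + 2 * ((1 - \<gamma>) / \<gamma>) * (a \<bullet> f) + 1 / (\<gamma> * \<rho>) * sqn f"
proof -
  note distrib = add_scalar_prod_distrib[of _ l] scalar_prod_add_distrib[of _ l]
    minus_scalar_prod_distrib[of _ l] scalar_prod_minus_distrib[of _ l]
    smult_scalar_prod_distrib[of _ l] scalar_prod_smult_distrib[of _ l]
  have comm: "a \<bullet> a' = a' \<bullet> a" "a \<bullet> D = D \<bullet> a" "a' \<bullet> D = D \<bullet> a'"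
    "f \<bullet> a = a \<bullet> f" "f \<bullet> a' = a' \<bullet> f" "f \<bullet> D = D \<bullet> f"
    using carrier by (simp_all add: comm_scalar_prod[of _ l])
  have a'g: "a' \<bullet> g = a' \<bullet> f + \<rho> * ((1 - \<gamma>) * (a' \<bullet> a) - sqn a' - \<gamma> * (D \<bullet> a'))"
    unfolding g sqn_def using carrier by (simp add: distrib comm algebra_simps)
  have gg: "sqn g = sqn f + 2 * \<rho> * ((1 - \<gamma>) * (a \<bullet> f) - a' \<bullet> f - \<gamma> * (D \<bullet> f))
      + \<rho>\<^sup>2 * ((1 - \<gamma>)\<^sup>2 * sqn a + sqn a' + \<gamma>\<^sup>2 * sqn D
               - 2 * (1 - \<gamma>) * (a' \<bullet> a) - 2 * (1 - \<gamma>) * \<gamma> * (D \<bullet> a) + 2 * \<gamma> * (D \<bullet> a'))"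
    unfolding g sqn_def using carrier
    by (simp add: distrib comm algebra_simps power2_eq_square)
  have Da: "sqn (D + a) = sqn D + 2 * (D \<bullet> a) + sqn a"
    using sqn_add_smult[of D l a 1] carrier by (simp add: comm)
  \<comment> \<open>The gap is a nonnegative combination of the hypotheses; \<open>\<gamma> < 2\<close> enters only in the last term.\<close>
  have gap: "(Ge + We + \<rho> / \<gamma> * sqn a + 2 * ((1 - \<gamma>) / \<gamma>) * (a \<bullet> f) + 1 / (\<gamma> * \<rho>) * sqn f)
      - (Gd + Wd + \<rho> / \<gamma> * sqn a' + 2 * ((1 - \<gamma>) / \<gamma>) * (a' \<bullet> g) + 1 / (\<gamma> * \<rho>) * sqn g)
      = 2 * (D \<bullet> f - \<rho> * sqn D - \<rho> * (D \<bullet> a) + B - Gd) + 2 * (a' \<bullet> g + Wed - Wd)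
        + (Ge - 2 * B + Gd) + (We - 2 * Wed + Wd) + (2 - \<gamma>) * \<rho> * sqn (D + a)"
    unfolding a'g gg Da using \<rho> \<gamma>
    by (simp add: field_simps) (simp add: algebra_simps power2_eq_square)
  have "0 \<le> (2 - \<gamma>) * \<rho> * sqn (D + a)" using \<rho> \<gamma> sqn_nonneg by simp
  moreover have "0 \<le> 2 * p + 2 * q + r + s + t"
    if "0 \<le> p" "0 \<le> q" "0 \<le> r" "0 \<le> s" "0 \<le> t" for p q r s t :: real
    using that by simp
  ultimately show ?thesis
    using gap blocks last_block G1_psd P_psd by fastforce
qed

lemma sum_remove_one_block:
  fixes F :: "nat \<Rightarrow> 'a::ab_group_add"
  assumes "j \<in> {1..m-1}"
  shows "(\<Sum>i\<in>{1..m}-{j}. F i) = (\<Sum>i\<in>{1..m-1}. F i) + F m - F j"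
proof -
  have "{1..m} = insert m {1..m-1}" "m \<notin> {1..m-1}" using assms by auto
  then show ?thesis using assms by (simp add: sum_diff1 algebra_simps)
qed

locale lgadmm =
  fixes m l :: nat and n :: "nat \<Rightarrow> nat"
    and \<theta> :: "nat \<Rightarrow> real vec \<Rightarrow> real" and X :: "nat \<Rightarrow> real vec set"
    and A P :: "nat \<Rightarrow> real mat" and b :: "real vec" and \<rho> \<gamma> :: real
    and x :: "nat \<Rightarrow> nat \<Rightarrow> real vec" and y :: "nat \<Rightarrow> real vec"
  assumes m_pos: "0 < m"
    and convex_\<theta>: "\<And>i. i \<in> {1..m} \<Longrightarrow> convex_vec_fun (n i) (\<theta> i)"
    and convex_X: "\<And>i. i \<in> {1..m} \<Longrightarrow> convex_vec_set (n i) (X i)"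
    and A_carrier: "\<And>i. i \<in> {1..m} \<Longrightarrow> A i \<in> carrier_mat l (n i)"
    and P_sym_pd: "\<And>i. i \<in> {1..m} \<Longrightarrow> sym_pd (n i) (P i)"
    and b_carrier: "b \<in> carrier_vec l"
    and \<rho>_pos: "0 < \<rho>" and \<gamma>_pos: "0 < \<gamma>" and \<gamma>_less_2: "\<gamma> < 2"
    and G1_psd: "\<And>d. (\<And>i. i \<in> {1..m-1} \<Longrightarrow> d i \<in> carrier_vec (n i)) \<Longrightarrow> 0 \<le> G1_qf m \<rho> A P d"
    and x_0: "\<And>i. i \<in> {1..m} \<Longrightarrow> x 0 i \<in> X i" and y_0: "y 0 \<in> carrier_vec l"
    and x_step: "\<And>k j. j \<in> {1..m-1} \<Longrightarrow> is_arg_min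
        (\<lambda>z. \<theta> j z
             + (\<rho> / 2) * sqn (A j *\<^sub>v z + vsum l (\<lambda>i. A i *\<^sub>v x k i) ({1..m} - {j}) - b
                               - (1 / \<rho>) \<cdot>\<^sub>v y k)
             + (1 / 2) * wnorm2 (P j) (z - x k j))
        (\<lambda>z. z \<in> X j) (x (Suc k) j)"
    and x_last_step: "\<And>k. is_arg_min
        (\<lambda>z. \<theta> m z
             + (\<rho> / 2) * sqn (\<gamma> \<cdot>\<^sub>v vsum l (\<lambda>i. A i *\<^sub>v x (Suc k) i) {1..m-1}
                               + (1 - \<gamma>) \<cdot>\<^sub>v (b - A m *\<^sub>v x k m)
                               + A m *\<^sub>v z - b - (1 / \<rho>) \<cdot>\<^sub>v y k)
             + (1 / 2) * wnorm2 (P m) (z - x k m))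
        (\<lambda>z. z \<in> X m) (x (Suc k) m)"
    and y_step: "\<And>k. y (Suc k) = y k - \<rho> \<cdot>\<^sub>v
        (\<gamma> \<cdot>\<^sub>v vsum l (\<lambda>i. A i *\<^sub>v x (Suc k) i) {1..m-1}
         + (1 - \<gamma>) \<cdot>\<^sub>v (b - A m *\<^sub>v x k m) + A m *\<^sub>v x (Suc k) m - b)"
begin

lemma P_carrier: "i \<in> {1..m} \<Longrightarrow> P i \<in> carrier_mat (n i) (n i)"
  and P_sym: "i \<in> {1..m} \<Longrightarrow> transpose_mat (P i) = P i"
  using P_sym_pd by (auto simp: sym_pd_def)

lemma last_block_index: "m \<in> {1..m}"
  using m_pos by auto

lemma x_in_X: "i \<in> {1..m} \<Longrightarrow> x k i \<in> X i"
proof (cases k)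
  case (Suc k')
  assume "i \<in> {1..m}"
  then consider "i = m" | "i \<in> {1..m-1}" by fastforce
  then show ?thesis
    using x_step[of i k'] x_last_step[of k'] unfolding Suc is_arg_min_def by cases auto
qed (use x_0 in auto)

lemma x_carrier: "i \<in> {1..m} \<Longrightarrow> x k i \<in> carrier_vec (n i)"
  using x_in_X convex_X by (auto simp: convex_vec_set_def)

lemma y_carrier: "y k \<in> carrier_vec l"
proof (induction k)
  case (Suc k)
  show ?case
    using Suc b_carrier A_carrier[OF last_block_index] x_carrier[OF last_block_index]
    by (simp add: y_step[of k])
qed (rule y_0)

lemma dim_y [simp]: "dim_vec (y k) = l" and dim_b [simp]: "dim_vec b = l"
  using y_carrier b_carrier by simp_all

definition dx :: "nat \<Rightarrow> nat \<Rightarrow> real vec" where "dx k i = x k i - x (Suc k) i"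

definition dy :: "nat \<Rightarrow> real vec" where "dy k = y k - y (Suc k)"

definition Adx_sum :: "nat \<Rightarrow> real vec" where
  "Adx_sum k = vsum l (\<lambda>i. A i *\<^sub>v dx k i) {1..m-1}"

definition offset :: "nat \<Rightarrow> nat \<Rightarrow> real vec" where
  "offset k j = vsum l (\<lambda>i. A i *\<^sub>v x k i) ({1..m} - {j}) - b - (1 / \<rho>) \<cdot>\<^sub>v y k"

definition offset_last :: "nat \<Rightarrow> real vec" where
  "offset_last k = \<gamma> \<cdot>\<^sub>v vsum l (\<lambda>i. A i *\<^sub>v x (Suc k) i) {1..m-1}
                   + (1 - \<gamma>) \<cdot>\<^sub>v (b - A m *\<^sub>v x k m) - b - (1 / \<rho>) \<cdot>\<^sub>v y k"

lemma dim_Adx_sum [simp]: "dim_vec (Adx_sum k) = l"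
  by (simp add: Adx_sum_def)

lemma dim_offset [simp]: "dim_vec (offset k j) = l"
  by (simp add: offset_def)

lemma Adx_sum_carrier: "Adx_sum k \<in> carrier_vec l"
  by (simp add: Adx_sum_def)

lemma dx_carrier: "i \<in> {1..m} \<Longrightarrow> dx k i \<in> carrier_vec (n i)"
  using x_carrier[of i k] x_carrier[of i "Suc k"] by (simp add: dx_def)

lemma dy_carrier: "dy k \<in> carrier_vec l"
  by (simp add: dy_def y_carrier)

lemma A_dx_carrier: "i \<in> {1..m} \<Longrightarrow> A i *\<^sub>v dx k i \<in> carrier_vec l"
  using A_carrier dx_carrier by (rule mult_mat_vec_carrier)

lemma A_dx: "i \<in> {1..m} \<Longrightarrow> A i *\<^sub>v dx k i = A i *\<^sub>v x k i - A i *\<^sub>v x (Suc k) i"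
  unfolding dx_def using A_carrier x_carrier x_carrier by (rule mult_minus_distrib_mat_vec)

lemma x_step_variational_ineq:
  assumes j: "j \<in> {1..m-1}" and z: "z \<in> X j"
  shows "0 \<le> \<theta> j z - \<theta> j (x (Suc k) j)
             + \<rho> * ((A j *\<^sub>v (z - x (Suc k) j)) \<bullet> (A j *\<^sub>v x (Suc k) j + offset k j))
             + (z - x (Suc k) j) \<bullet> (P j *\<^sub>v (x (Suc k) j - x k j))"
proof -
  have j': "j \<in> {1..m}" using j by auto
  have "is_arg_min (\<lambda>z. \<theta> j z + \<rho> / 2 * sqn (A j *\<^sub>v z + offset k j) + 1 / 2 * wnorm2 (P j) (z - x k j))
          (\<lambda>z. z \<in> X j) (x (Suc k) j)"
  proof (rule is_arg_min_cong[OF x_step[OF j]])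
    fix z assume "z \<in> X j"
    then have "z \<in> carrier_vec (n j)" using convex_X[OF j'] by (auto simp: convex_vec_set_def)
    then have "A j *\<^sub>v z + vsum l (\<lambda>i. A i *\<^sub>v x k i) ({1..m} - {j}) - b - (1 / \<rho>) \<cdot>\<^sub>v y k
               = A j *\<^sub>v z + offset k j"
      unfolding offset_def using A_carrier[OF j'] y_carrier b_carrier by (intro eq_vecI) auto
    then show "\<theta> j z + \<rho> / 2 * sqn (A j *\<^sub>v z + vsum l (\<lambda>i. A i *\<^sub>v x k i) ({1..m} - {j}) - b
                 - (1 / \<rho>) \<cdot>\<^sub>v y k) + 1 / 2 * wnorm2 (P j) (z - x k j)
             = \<theta> j z + \<rho> / 2 * sqn (A j *\<^sub>v z + offset k j) + 1 / 2 * wnorm2 (P j) (z - x k j)"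
      by simp
  qed
  from is_arg_min_prox_variational_ineq[OF convex_\<theta>[OF j'] convex_X[OF j'] A_carrier[OF j']
      P_carrier[OF j'] P_sym[OF j'] _ x_carrier[OF j'] this z]
  show ?thesis using y_carrier b_carrier by (simp add: offset_def)
qed

lemma x_last_step_variational_ineq:
  assumes z: "z \<in> X m"
  shows "0 \<le> \<theta> m z - \<theta> m (x (Suc k) m)
             + \<rho> * ((A m *\<^sub>v (z - x (Suc k) m)) \<bullet> (A m *\<^sub>v x (Suc k) m + offset_last k))
             + (z - x (Suc k) m) \<bullet> (P m *\<^sub>v (x (Suc k) m - x k m))"
proof -
  note last = last_block_index
  have "is_arg_min (\<lambda>z. \<theta> m z + \<rho> / 2 * sqn (A m *\<^sub>v z + offset_last k) + 1 / 2 * wnorm2 (P m) (z - x k m))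
          (\<lambda>z. z \<in> X m) (x (Suc k) m)"
  proof (rule is_arg_min_cong[OF x_last_step])
    fix z assume "z \<in> X m"
    then have "z \<in> carrier_vec (n m)" using convex_X[OF last] by (auto simp: convex_vec_set_def)
    then have "\<gamma> \<cdot>\<^sub>v vsum l (\<lambda>i. A i *\<^sub>v x (Suc k) i) {1..m-1} + (1 - \<gamma>) \<cdot>\<^sub>v (b - A m *\<^sub>v x k m)
               + A m *\<^sub>v z - b - (1 / \<rho>) \<cdot>\<^sub>v y k = A m *\<^sub>v z + offset_last k"
      unfolding offset_last_def using A_carrier[OF last] x_carrier[OF last] y_carrier b_carrier
      by (intro eq_vecI) auto
    then show "\<theta> m z + \<rho> / 2 * sqn (\<gamma> \<cdot>\<^sub>v vsum l (\<lambda>i. A i *\<^sub>v x (Suc k) i) {1..m-1}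
                 + (1 - \<gamma>) \<cdot>\<^sub>v (b - A m *\<^sub>v x k m) + A m *\<^sub>v z - b - (1 / \<rho>) \<cdot>\<^sub>v y k)
                 + 1 / 2 * wnorm2 (P m) (z - x k m)
             = \<theta> m z + \<rho> / 2 * sqn (A m *\<^sub>v z + offset_last k) + 1 / 2 * wnorm2 (P m) (z - x k m)"
      by simp
  qed
  from is_arg_min_prox_variational_ineq[OF convex_\<theta>[OF last] convex_X[OF last] A_carrier[OF last]
      P_carrier[OF last] P_sym[OF last] _ x_carrier[OF last] this z]
  show ?thesis using y_carrier b_carrier A_carrier[OF last] x_carrier[OF last] by (simp add: offset_last_def)
qed

lemma x_step_monotone:
  assumes j: "j \<in> {1..m-1}"
  shows "0 \<le> \<rho> * ((A j *\<^sub>v dx (Suc k) j) \<bullet> (A j *\<^sub>v x (Suc (Suc k)) j + offset (Suc k) j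
                                           - (A j *\<^sub>v x (Suc k) j + offset k j)))
             + dx (Suc k) j \<bullet> (P j *\<^sub>v dx k j) - wnorm2 (P j) (dx (Suc k) j)"
proof -
  have j': "j \<in> {1..m}" using j by auto
  have "offset k' j \<in> carrier_vec l" for k' using y_carrier b_carrier by (simp add: offset_def)
  then show ?thesis
    using prox_variational_ineqs_add[OF A_carrier[OF j'] P_carrier[OF j'] P_sym[OF j']
        x_carrier[OF j'] x_carrier[OF j'] x_carrier[OF j'] _ _
        x_step_variational_ineq[where k = k and z = "x (Suc (Suc k)) j", OF j x_in_X[OF j']]
        x_step_variational_ineq[where k = "Suc k" and z = "x (Suc k) j", OF j x_in_X[OF j']]]
      A_carrier[OF j'] x_carrier[OF j']
    by (simp add: dx_def)
qed

lemma x_last_step_monotone: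
  "0 \<le> \<rho> * ((A m *\<^sub>v dx (Suc k) m) \<bullet> (A m *\<^sub>v x (Suc (Suc k)) m + offset_last (Suc k)
                                       - (A m *\<^sub>v x (Suc k) m + offset_last k)))
        + dx (Suc k) m \<bullet> (P m *\<^sub>v dx k m) - wnorm2 (P m) (dx (Suc k) m)"
proof -
  note last = last_block_index
  have "offset_last k' \<in> carrier_vec l" for k'
    using y_carrier b_carrier A_carrier[OF last] x_carrier[OF last] by (simp add: offset_last_def)
  then show ?thesis
    using prox_variational_ineqs_add[OF A_carrier[OF last] P_carrier[OF last] P_sym[OF last]
        x_carrier[OF last] x_carrier[OF last] x_carrier[OF last] _ _
        x_last_step_variational_ineq[where k = k and z = "x (Suc (Suc k)) m", OF x_in_X[OF last]]
        x_last_step_variational_ineq[where k = "Suc k" and z = "x (Suc k) m", OF x_in_X[OF last]]]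
      A_carrier[OF last] x_carrier[OF last]
    by (simp add: dx_def)
qed

lemma index_A_dx:
  assumes "i \<in> {1..m}" "r < l"
  shows "(A i *\<^sub>v dx k i) $ r = (A i *\<^sub>v x k i) $ r - (A i *\<^sub>v x (Suc k) i) $ r"
  using assms carrier_matD(1)[OF A_carrier[OF assms(1)]] by (simp add: A_dx)

lemma index_Adx_sum:
  assumes "r < l"
  shows "Adx_sum k $ r = (\<Sum>i\<in>{1..m-1}. (A i *\<^sub>v x k i) $ r) - (\<Sum>i\<in>{1..m-1}. (A i *\<^sub>v x (Suc k) i) $ r)"
  unfolding Adx_sum_def index_vsum[OF assms] sum_subtractf[symmetric]
  using assms by (intro sum.cong refl index_A_dx) auto

lemma index_offset:
  assumes "j \<in> {1..m-1}" "r < l"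
  shows "offset k j $ r = (\<Sum>i\<in>{1..m-1}. (A i *\<^sub>v x k i) $ r) + (A m *\<^sub>v x k m) $ r
                          - (A j *\<^sub>v x k j) $ r - b $ r - y k $ r / \<rho>"
  using assms(2) by (subst sum_remove_one_block[OF assms(1), symmetric]) (simp add: offset_def)

lemma index_y_Suc:
  "r < l \<Longrightarrow> y (Suc k) $ r = y k $ r - \<rho> * (\<gamma> * (\<Sum>i\<in>{1..m-1}. (A i *\<^sub>v x (Suc k) i) $ r)
     + (1 - \<gamma>) * (b $ r - (A m *\<^sub>v x k m) $ r) + (A m *\<^sub>v x (Suc k) m) $ r - b $ r)"
  using A_carrier[OF last_block_index] by (subst y_step) simp

lemma offset_diff:
  assumes j: "j \<in> {1..m-1}"
  shows "A j *\<^sub>v x (Suc (Suc k)) j + offset (Suc k) j - (A j *\<^sub>v x (Suc k) j + offset k j)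
       = (1 / \<rho>) \<cdot>\<^sub>v dy k - A j *\<^sub>v dx (Suc k) j - Adx_sum k - A m *\<^sub>v dx k m + A j *\<^sub>v dx k j"
    (is "?lhs = ?rhs")
proof -
  have j': "j \<in> {1..m}" using j by auto
  note dims = carrier_matD(1)[OF A_carrier[OF j']] carrier_matD(1)[OF A_carrier[OF last_block_index]]
  show ?thesis
  proof (rule eq_vecI)
    fix r assume "r < dim_vec ?rhs"
    then have r: "r < l" using dims by (simp add: dy_def)
    then show "?lhs $ r = ?rhs $ r"
      using dims
      by (simp add: index_offset[OF j r] index_Adx_sum[OF r] index_A_dx[OF j' r]
          index_A_dx[OF last_block_index r] dy_def diff_divide_distrib)
  qed (simp add: dims dy_def)
qed

lemma offset_last_eq: "A m *\<^sub>v x (Suc k) m + offset_last k = - (1 / \<rho>) \<cdot>\<^sub>v y (Suc k)"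
proof (rule eq_vecI)
  note dims = carrier_matD(1)[OF A_carrier[OF last_block_index]]
  fix r assume "r < dim_vec (- (1 / \<rho>) \<cdot>\<^sub>v y (Suc k))"
  then have r: "r < l" by simp
  show "(A m *\<^sub>v x (Suc k) m + offset_last k) $ r = (- (1 / \<rho>) \<cdot>\<^sub>v y (Suc k)) $ r"
    using r dims \<rho>_pos by (simp add: index_y_Suc[OF r] offset_last_def field_simps)
qed (simp add: offset_last_def)

lemma dy_Suc:
  "dy (Suc k) = dy k + \<rho> \<cdot>\<^sub>v ((1 - \<gamma>) \<cdot>\<^sub>v (A m *\<^sub>v dx k m) - A m *\<^sub>v dx (Suc k) m - \<gamma> \<cdot>\<^sub>v Adx_sum (Suc k))"
proof (rule eq_vecI)
  note last = last_block_index
  note dims = carrier_matD(1)[OF A_carrier[OF last]]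
  fix r assume "r < dim_vec (dy k + \<rho> \<cdot>\<^sub>v ((1 - \<gamma>) \<cdot>\<^sub>v (A m *\<^sub>v dx k m) - A m *\<^sub>v dx (Suc k) m
                                         - \<gamma> \<cdot>\<^sub>v Adx_sum (Suc k)))"
  then have r: "r < l" by (simp add: dy_def)
  show "dy (Suc k) $ r = (dy k + \<rho> \<cdot>\<^sub>v ((1 - \<gamma>) \<cdot>\<^sub>v (A m *\<^sub>v dx k m) - A m *\<^sub>v dx (Suc k) m
                                         - \<gamma> \<cdot>\<^sub>v Adx_sum (Suc k))) $ r"
    using r dims
    by (simp add: dy_def index_y_Suc[OF r] index_y_Suc[OF r, of "Suc k"] index_Adx_sum[OF r]
        index_A_dx[OF last r] algebra_simps)
qed (simp add: dy_def)

lemma x_step_block_ineq: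
  fixes k :: nat
  assumes j: "j \<in> {1..m-1}"
  defines "\<beta> \<equiv> A j *\<^sub>v dx (Suc k) j"
  shows "0 \<le> \<beta> \<bullet> dy k - \<rho> * sqn \<beta> - \<rho> * (\<beta> \<bullet> Adx_sum k) - \<rho> * (\<beta> \<bullet> (A m *\<^sub>v dx k m))
             + \<rho> * ((A j *\<^sub>v dx k j) \<bullet> \<beta>) + dx (Suc k) j \<bullet> (P j *\<^sub>v dx k j) - wnorm2 (P j) (dx (Suc k) j)"
proof -
  have j': "j \<in> {1..m}" using j by auto
  have carriers: "\<beta> \<in> carrier_vec l" "A j *\<^sub>v dx k j \<in> carrier_vec l" "A m *\<^sub>v dx k m \<in> carrier_vec l"
    using A_dx_carrier[OF j'] A_dx_carrier[OF last_block_index] by (simp_all add: \<beta>_def)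
  have "\<rho> * (\<beta> \<bullet> ((1 / \<rho>) \<cdot>\<^sub>v dy k - \<beta> - Adx_sum k - A m *\<^sub>v dx k m + A j *\<^sub>v dx k j))
      = \<beta> \<bullet> dy k - \<rho> * sqn \<beta> - \<rho> * (\<beta> \<bullet> Adx_sum k) - \<rho> * (\<beta> \<bullet> (A m *\<^sub>v dx k m))
        + \<rho> * ((A j *\<^sub>v dx k j) \<bullet> \<beta>)"
    using carriers dy_carrier Adx_sum_carrier \<rho>_pos
    by (simp add: sqn_def scalar_prod_add_distrib[of _ l] scalar_prod_minus_distrib[of _ l]
        scalar_prod_smult_distrib[of _ l] comm_scalar_prod[of \<beta> l "A j *\<^sub>v dx k j"] algebra_simps)
  then show ?thesis
    using x_step_monotone[OF j, of k] unfolding offset_diff[OF j] \<beta>_def by simp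
qed

lemma x_steps_ineq:
  "0 \<le> Adx_sum (Suc k) \<bullet> dy k - \<rho> * sqn (Adx_sum (Suc k)) - \<rho> * (Adx_sum (Suc k) \<bullet> (A m *\<^sub>v dx k m))
        + G1_bf m \<rho> A P (dx k) (dx (Suc k)) - G1_qf m \<rho> A P (dx (Suc k))"
proof -
  define J where "J = {1..m-1}"
  define \<alpha> where "\<alpha> = (\<lambda>i. A i *\<^sub>v dx k i)"
  define \<beta> where "\<beta> = (\<lambda>i. A i *\<^sub>v dx (Suc k) i)"
  have J: "i \<in> {1..m}" if "i \<in> J" for i using that by (auto simp: J_def)
  have \<alpha>\<beta>: "\<alpha> i \<in> carrier_vec l" "\<beta> i \<in> carrier_vec l" if "i \<in> J" for i
    using A_dx_carrier[OF J[OF that]] by (simp_all add: \<alpha>_def \<beta>_def)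
  have sum_\<beta>: "(\<Sum>i\<in>J. \<beta> i \<bullet> v) = vsum l \<beta> J \<bullet> v" if "v \<in> carrier_vec l" for v
    using vsum_scalar_prod[of J \<beta> l v] \<alpha>\<beta> that by (simp add: J_def)
  have G1_bf: "G1_bf m \<rho> A P (dx k) (dx (Suc k)) = (\<Sum>i\<in>J. dx (Suc k) i \<bullet> (P i *\<^sub>v dx k i))
      - \<rho> * (vsum l \<alpha> J \<bullet> vsum l \<beta> J - (\<Sum>i\<in>J. \<alpha> i \<bullet> \<beta> i))"
    unfolding J_def \<alpha>_def \<beta>_def using A_carrier dx_carrier by (intro G1_bf_eq_vsum[where n = n]) auto
  have G1_qf: "G1_qf m \<rho> A P (dx (Suc k)) = (\<Sum>i\<in>J. wnorm2 (P i) (dx (Suc k) i))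
      - \<rho> * (sqn (vsum l \<beta> J) - (\<Sum>i\<in>J. sqn (\<beta> i)))"
    unfolding G1_qf_eq_G1_bf J_def \<beta>_def sqn_def wnorm2_def
    using A_carrier dx_carrier by (intro G1_bf_eq_vsum[where n = n]) auto
  have "0 \<le> (\<Sum>j\<in>J. \<beta> j \<bullet> dy k - \<rho> * sqn (\<beta> j) - \<rho> * (\<beta> j \<bullet> vsum l \<alpha> J)
                 - \<rho> * (\<beta> j \<bullet> (A m *\<^sub>v dx k m)) + \<rho> * (\<alpha> j \<bullet> \<beta> j)
                 + dx (Suc k) j \<bullet> (P j *\<^sub>v dx k j) - wnorm2 (P j) (dx (Suc k) j))"
    using x_step_block_ineq unfolding J_def \<alpha>_def \<beta>_def Adx_sum_def by (intro sum_nonneg) auto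
  also have "\<dots> = vsum l \<beta> J \<bullet> dy k - \<rho> * sqn (vsum l \<beta> J) - \<rho> * (vsum l \<beta> J \<bullet> (A m *\<^sub>v dx k m))
      + G1_bf m \<rho> A P (dx k) (dx (Suc k)) - G1_qf m \<rho> A P (dx (Suc k))"
    using A_dx_carrier[OF last_block_index] dy_carrier
      comm_scalar_prod[of "vsum l \<alpha> J" l "vsum l \<beta> J"]
    unfolding G1_bf G1_qf
    by (simp add: sum.distrib sum_subtractf sum_distrib_left[symmetric] sum_\<beta> algebra_simps)
  finally show ?thesis unfolding Adx_sum_def J_def \<beta>_def .
qed

lemma x_last_step_block_ineq:
  "0 \<le> (A m *\<^sub>v dx (Suc k) m) \<bullet> dy (Suc k) + dx (Suc k) m \<bullet> (P m *\<^sub>v dx k m) - wnorm2 (P m) (dx (Suc k) m)"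
proof -
  have "A m *\<^sub>v x (Suc (Suc k)) m + offset_last (Suc k) - (A m *\<^sub>v x (Suc k) m + offset_last k)
      = (1 / \<rho>) \<cdot>\<^sub>v dy (Suc k)"
    unfolding offset_last_eq by (intro eq_vecI) (auto simp: dy_def algebra_simps)
  moreover have "A m *\<^sub>v dx (Suc k) m \<in> carrier_vec l"
    using A_dx_carrier[OF last_block_index] .
  ultimately show ?thesis
    using x_last_step_monotone[of k] dy_carrier \<rho>_pos by simp
qed

lemma H_qf_decrease:
  "H_qf m \<rho> \<gamma> A P (dx (Suc k)) (dy (Suc k)) \<le> H_qf m \<rho> \<gamma> A P (dx k) (dy k)"
proof -
  note last = last_block_index
  have "0 \<le> G1_qf m \<rho> A P (\<lambda>i. dx k i - dx (Suc k) i)"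
    using dx_carrier by (intro G1_psd) auto
  then have G1: "0 \<le> G1_qf m \<rho> A P (dx k) - 2 * G1_bf m \<rho> A P (dx k) (dx (Suc k)) + G1_qf m \<rho> A P (dx (Suc k))"
    using A_carrier P_carrier P_sym dx_carrier by (subst (asm) G1_qf_diff[where l = l and n = n]) auto
  have "0 \<le> wnorm2 (P m) (dx k m - dx (Suc k) m)"
    using P_sym_pd[OF last] dx_carrier[OF last] by (intro wnorm2_nonneg) auto
  then have P_m: "0 \<le> wnorm2 (P m) (dx k m) - 2 * (dx (Suc k) m \<bullet> (P m *\<^sub>v dx k m)) + wnorm2 (P m) (dx (Suc k) m)"
    by (simp add: wnorm2_diff[OF P_carrier[OF last] P_sym[OF last] dx_carrier[OF last] dx_carrier[OF last]])
  show ?thesis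
    unfolding H_qf_def
    by (rule H_qf_step_algebra[OF A_dx_carrier[OF last] A_dx_carrier[OF last] Adx_sum_carrier dy_carrier
          \<rho>_pos \<gamma>_pos \<gamma>_less_2 dy_Suc x_steps_ineq x_last_step_block_ineq G1 P_m])
qed

end

theorem theorem4p4:
  fixes m l :: nat and n :: "nat \<Rightarrow> nat"
    and \<theta> :: "nat \<Rightarrow> real vec \<Rightarrow> real"
    and X :: "nat \<Rightarrow> real vec set"
    and A P :: "nat \<Rightarrow> real mat"
    and b :: "real vec"
    and \<rho> \<gamma> :: real
    and x :: "nat \<Rightarrow> nat \<Rightarrow> real vec"
    and y :: "nat \<Rightarrow> real vec"
  assumes m2: "m \<ge> 2" and lpos: "l > 0"
    and npos: "\<forall>i\<in>{1..m}. n i > 0"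
    and conv\<theta>: "\<forall>i\<in>{1..m}. convex_vec_fun (n i) (\<theta> i)"
    and Xne: "\<forall>i\<in>{1..m}. X i \<noteq> {}"
    and Xclosed: "\<forall>i\<in>{1..m}. closed_vec_set (n i) (X i)"
    and Xconv: "\<forall>i\<in>{1..m}. convex_vec_set (n i) (X i)"
    and Arank: "\<forall>i\<in>{1..m}. full_col_rank l (n i) (A i)"
    and b: "b \<in> carrier_vec l"
    and Psol: "\<exists>u. (\<forall>i\<in>{1..m}. u i \<in> X i) \<and> vsum l (\<lambda>i. A i *\<^sub>v u i) {1..m} = b \<and>
                 (\<forall>v. (\<forall>i\<in>{1..m}. v i \<in> X i) \<and> vsum l (\<lambda>i. A i *\<^sub>v v i) {1..m} = b \<longrightarrow>
                      (\<Sum>i\<in>{1..m}. \<theta> i (u i)) \<le> (\<Sum>i\<in>{1..m}. \<theta> i (v i)))"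
    and Wstar: "\<exists>xs ys. (\<forall>i\<in>{1..m}. xs i \<in> X i) \<and> ys \<in> carrier_vec l \<and>
                 (\<forall>xx yy. (\<forall>i\<in>{1..m}. xx i \<in> X i) \<and> yy \<in> carrier_vec l \<longrightarrow>
                    (\<Sum>i\<in>{1..m}. \<theta> i (xx i)) - (\<Sum>i\<in>{1..m}. \<theta> i (xs i))
                    + (\<Sum>i\<in>{1..m}. (xx i - xs i) \<bullet> (- (transpose_mat (A i) *\<^sub>v ys)))
                    + (yy - ys) \<bullet> (vsum l (\<lambda>i. A i *\<^sub>v xs i) {1..m} - b) \<ge> 0)"
    and rho: "\<rho> > 0" and gam: "0 < \<gamma>" "\<gamma> < 2"
    and Ppd: "\<forall>i\<in>{1..m}. sym_pd (n i) (P i)"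
    and G1pd: "\<forall>d. (\<forall>i\<in>{1..m-1}. d i \<in> carrier_vec (n i)) \<and>
                    (\<exists>i\<in>{1..m-1}. d i \<noteq> 0\<^sub>v (n i)) \<longrightarrow> G1_qf m \<rho> A P d > 0"
    and x0: "\<forall>i\<in>{1..m}. x 0 i \<in> X i" and y0: "y 0 \<in> carrier_vec l"
    and xstep: "\<forall>k. \<forall>j\<in>{1..m-1}. is_arg_min
        (\<lambda>z. \<theta> j z
             + (\<rho> / 2) * sqn (A j *\<^sub>v z + vsum l (\<lambda>i. A i *\<^sub>v x k i) ({1..m} - {j}) - b
                               - (1 / \<rho>) \<cdot>\<^sub>v y k)
             + (1 / 2) * wnorm2 (P j) (z - x k j))
        (\<lambda>z. z \<in> X j) (x (Suc k) j)"
    and xmstep: "\<forall>k. is_arg_min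
        (\<lambda>z. \<theta> m z
             + (\<rho> / 2) * sqn (\<gamma> \<cdot>\<^sub>v vsum l (\<lambda>i. A i *\<^sub>v x (Suc k) i) {1..m-1}
                               + (1 - \<gamma>) \<cdot>\<^sub>v (b - A m *\<^sub>v x k m)
                               + A m *\<^sub>v z - b - (1 / \<rho>) \<cdot>\<^sub>v y k)
             + (1 / 2) * wnorm2 (P m) (z - x k m))
        (\<lambda>z. z \<in> X m) (x (Suc k) m)"
    and ystep: "\<forall>k. y (Suc k) = y k - \<rho> \<cdot>\<^sub>v
        (\<gamma> \<cdot>\<^sub>v vsum l (\<lambda>i. A i *\<^sub>v x (Suc k) i) {1..m-1}
         + (1 - \<gamma>) \<cdot>\<^sub>v (b - A m *\<^sub>v x k m) + A m *\<^sub>v x (Suc k) m - b)"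
  shows "\<forall>k. H_qf m \<rho> \<gamma> A P (\<lambda>i. x (k+1) i - x (k+2) i) (y (k+1) - y (k+2))
            \<le> H_qf m \<rho> \<gamma> A P (\<lambda>i. x k i - x (k+1) i) (y k - y (k+1))"
proof -
  have A_carrier: "A i \<in> carrier_mat l (n i)" if "i \<in> {1..m}" for i
    using Arank that by (simp add: full_col_rank_def)
  interpret lgadmm m l n \<theta> X A P b \<rho> \<gamma> x y
  proof
    show "0 \<le> G1_qf m \<rho> A P d" if "\<And>i. i \<in> {1..m-1} \<Longrightarrow> d i \<in> carrier_vec (n i)" for d
      using G1pd A_carrier Ppd that by (intro G1_qf_nonneg[where l = l]) (auto simp: sym_pd_def)
  qed (use m2 conv\<theta> Xconv A_carrier Ppd b rho gam x0 y0 xstep xmstep ystep in auto)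
  show ?thesis using H_qf_decrease by (simp add: dx_def[abs_def] dy_def)
qed

end
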